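(* For all $T_0 \in \mathcal{G}(X)$, $\mathcal{S}_{T_0} \subset \mathcal{G}_{T_0}\setminus\mathcal{R}_{T_0}$; that is, no strongly mixing extension of $T_0$ is a rigid extension of $T_0$.
   Context: Let $(X,m)$ and $(Y,\nu)$ both be the unit interval with Lebesgue measure, and $(Z,\mu) = (X\times Y, m\times\nu)$. $\mathcal{G}(W)$ denotes the set of invertible measure-preserving transformations of a space $W$. $\mathcal{G}_{T_0} \subset \mathcal{G}(Z)$ is the set of transformations of the form $T(x,y) = (T_0x, T_x y)$ with $T_x \in \mathcal{G}(Y)$ (extensions of $T_0$); $T_0$ is identified with $T_0\times\mathrm{id}_Y$ on $Z$. For $f$ on $Z$, $T^nf = f\circ T^n$. $\mathbb{E}(\cdot|X)$ is conditional expectation onto the $\sigma$-algebra of sets $B\times Y$. $L^2(Z|X)$ is the space of $f\in L^2(Z)$ with $\mathbb{E}(|f|^2|X)^{1/2} \in L^\infty(X)$. $T\in\mathcal{G}_{T_0}$ is a strongly mixing extension of $T_0$ if for all $f,g\in L^2(Z|X)$, $\lim_{n\to\infty}\|\mathbb{E}(T^n f\cdot\overline{g}|X) - T_0^n\mathbb{E}(f|X)\mathbb{E}(\overline{g}|X)\|_{L^2(X)} = 0$; $\mathcal{S}_{T_0}$ is the set of such extensions. $T\in\mathcal{G}_{T_0}$ is a rigid extension of $T_0$ if there is a subsequence $n_k$ such that for all $f,g\in L^2(Z|X)$, $\lim_{k\to\infty}\|\mathbb{E}(T^{n_k}f\cdot\overline{g}|X) - \mathbb{E}(T_0^{n_k}f\cdot\overline{g}|X)\|_{L^2(X)}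 = 0$; $\mathcal{R}_{T_0}$ is the set of rigid extensions. *)

theory Defs
  imports "HOL-Analysis.Analysis" "HOL-Probability.Probability"
begin

text \<open>The unit interval with Lebesgue measure; X = Y = this space, Z = X x Y.\<close>
definition UI :: "real measure" where
  "UI = lebesgue_on {0..1}"

definition ZZ :: "(real \<times> real) measure" where
  "ZZ = UI \<Otimes>\<^sub>M UI"

definition mp_trans :: "'a measure \<Rightarrow> ('a \<Rightarrow> 'a) \<Rightarrow> bool" where
  "mp_trans M T \<longleftrightarrow> T \<in> measurable M M \<and> distr M M T = M"

definition invmp :: "'a measure \<Rightarrow> ('a \<Rightarrow> 'a) set" where
  "invmp M = {T. bij_betw T (space M) (space M) \<and> mp_trans M T
                 \<and> mp_trans M (the_inv_into (space M) T)}"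

text \<open>The sigma-algebra of sets B x Y (B measurable in X), as a sub-algebra of Z.\<close>
definition FX :: "(real \<times> real) measure" where
  "FX = vimage_algebra (space ZZ) fst UI"

definition cond_expX :: "(real \<times> real \<Rightarrow> complex) \<Rightarrow> (real \<times> real \<Rightarrow> complex)" where
  "cond_expX f = (\<lambda>z. complex_of_real (real_cond_exp ZZ FX (\<lambda>w. Re (f w)) z)
                      + \<i> * complex_of_real (real_cond_exp ZZ FX (\<lambda>w. Im (f w)) z))"

definition L2ZX :: "(real \<times> real \<Rightarrow> complex) set" where
  "L2ZX = {f. f \<in> borel_measurable ZZ \<and> integrable ZZ (\<lambda>z. (cmod (f z))\<^sup>2)
              \<and> (\<exists>C. AE z in ZZ. sqrt (real_cond_exp ZZ FX (\<lambda>w. (cmod (f w))\<^sup>2) z) \<le> C)}"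

definition L2sq :: "(real \<times> real \<Rightarrow> complex) \<Rightarrow> ennreal" where
  "L2sq h = (\<integral>\<^sup>+ z. ennreal ((cmod (h z))\<^sup>2) \<partial>ZZ)"

definition liftX :: "(real \<Rightarrow> real) \<Rightarrow> (real \<times> real \<Rightarrow> real \<times> real)" where
  "liftX T0 = (\<lambda>(x, y). (T0 x, y))"

definition G_ext :: "(real \<Rightarrow> real) \<Rightarrow> (real \<times> real \<Rightarrow> real \<times> real) set" where
  "G_ext T0 = {T. T \<in> invmp ZZ \<and>
      (\<exists>S. \<forall>x\<in>space UI. S x \<in> invmp UI \<and> (\<forall>y\<in>space UI. T (x, y) = (T0 x, S x y)))}"

definition S_ext :: "(real \<Rightarrow> real) \<Rightarrow> (real \<times> real \<Rightarrow> real \<times> real) set" where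
  "S_ext T0 = {T \<in> G_ext T0. \<forall>f\<in>L2ZX. \<forall>g\<in>L2ZX.
      (\<lambda>n. L2sq (\<lambda>z. cond_expX (\<lambda>w. f ((T ^^ n) w) * cnj (g w)) z
                    - cond_expX f ((liftX T0 ^^ n) z) * cond_expX (\<lambda>w. cnj (g w)) z))
      \<longlonglongrightarrow> 0}"

definition R_ext :: "(real \<Rightarrow> real) \<Rightarrow> (real \<times> real \<Rightarrow> real \<times> real) set" where
  "R_ext T0 = {T \<in> G_ext T0. \<exists>nk::nat \<Rightarrow> nat. strict_mono nk \<and> (\<forall>f\<in>L2ZX. \<forall>g\<in>L2ZX.
      (\<lambda>k. L2sq (\<lambda>z. cond_expX (\<lambda>w. f ((T ^^ nk k) w) * cnj (g w)) z
                    - cond_expX (\<lambda>w. f ((liftX T0 ^^ nk k) w) * cnj (g w)) z))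
      \<longlonglongrightarrow> 0)}"

end

theory Submission
  imports Defs
begin

text \<open>Test both notions on f(x, y) = h(y), where h = \<plusminus>1 has mean zero on [0,1].
  Since T0 \<times> id does not move y, f((T0 \<times> id)^n z) cnj(f z) = h(y)^2 = 1, so the rigidity
  defect along n is E(T^n f cnj f | X) - 1, while E(f | X) = 0 makes the mixing defect equal
  to E(T^n f cnj f | X). The two defects differ by the constant 1, so by
  |a - b|^2 \<le> 2|a|^2 + 2|b|^2 their L^2 norms cannot both tend to 0 along a subsequence.\<close>

lemma space_UI: "space UI = {0..1}"
  unfolding UI_def by simp

lemma prob_space_UI: "prob_space UI"
proof
  show "emeasure UI (space UI) = 1"
    unfolding UI_def by (simp add: emeasure_restrict_space)
qed

lemma space_ZZ: "space ZZ = {0..1} \<times> {0..1}"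
  unfolding ZZ_def by (simp add: space_pair_measure space_UI)

lemma prob_space_ZZ: "prob_space ZZ"
  unfolding ZZ_def using prob_space_UI by (intro prob_space_pair)

lemma sigma_finite_subalgebra_FX: "sigma_finite_subalgebra ZZ FX"
proof -
  interpret prob_space ZZ by (rule prob_space_ZZ)
  have "fst \<in> measurable ZZ UI" unfolding ZZ_def by simp
  then have "subalgebra ZZ FX"
    unfolding subalgebra_def FX_def by (simp add: measurable_iff_sets)
  then have "finite_measure_subalgebra ZZ FX" by unfold_locales
  then show ?thesis by (rule finite_measure_subalgebra_is_sigma_finite)
qed

lemma real_cond_exp_FX_snd:
  assumes [measurable]: "g \<in> borel_measurable UI" and g_bound: "\<And>y. \<bar>g y\<bar> \<le> C"
  shows "AE z in ZZ. real_cond_exp ZZ FX (\<lambda>z. g (snd z)) z = integral\<^sup>L UI g"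
proof -
  interpret sigma_finite_subalgebra ZZ FX by (rule sigma_finite_subalgebra_FX)
  interpret ZZ: prob_space ZZ by (rule prob_space_ZZ)
  interpret UI: prob_space UI by (rule prob_space_UI)
  interpret pair_sigma_finite UI UI by unfold_locales
  have set_integral_snd: "(LINT z:fst -` B \<inter> space ZZ|ZZ. h (snd z)) = measure UI B * integral\<^sup>L UI h"
    if [measurable]: "B \<in> sets UI" "h \<in> borel_measurable UI" and h: "\<And>y. \<bar>h y\<bar> \<le> D" for B h D
  proof -
    have "(LINT z:fst -` B \<inter> space ZZ|ZZ. h (snd z)) = (\<integral>z. (\<lambda>(x, y). indicator B x * h y) z \<partial>ZZ)"
      unfolding set_lebesgue_integral_def
      by (rule Bochner_Integration.integral_cong) (auto simp: indicator_def)
    also have "\<dots> = (\<integral>x. (\<integral>y. indicator B x * h y \<partial>UI) \<partial>UI)"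
      unfolding ZZ_def
    proof (rule integral_fst[symmetric])
      have "\<bar>indicator B x * h y\<bar> \<le> D" for x y
        using h[of y] by (auto simp: indicator_def)
      then show "integrable (UI \<Otimes>\<^sub>M UI) (\<lambda>(x, y). indicator B x * h y)"
        using ZZ.finite_measure_axioms unfolding ZZ_def
        by (intro finite_measure.integrable_const_bound[where B=D]) (auto split: prod.split)
    qed
    also have "\<dots> = measure UI B * integral\<^sup>L UI h"
      by simp
    finally show ?thesis .
  qed
  have [measurable]: "(\<lambda>z. g (snd z)) \<in> borel_measurable ZZ"
    unfolding ZZ_def by measurable
  show ?thesis
  proof (rule real_cond_exp_charact)
    fix A assume "A \<in> sets FX"
    then obtain B where [measurable]: "B \<in> sets UI" and A: "A = fst -` B \<inter> space ZZ"
      unfolding FX_def by (subst (asm) sets_vimage_algebra2) (auto simp: space_ZZ space_UI)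
    show "(LINT z:A|ZZ. g (snd z)) = (LINT z:A|ZZ. integral\<^sup>L UI g)"
      using set_integral_snd[of B g C] set_integral_snd[of B "\<lambda>_. integral\<^sup>L UI g" "\<bar>integral\<^sup>L UI g\<bar>"]
      by (simp add: A g_bound UI.prob_space)
  qed (use g_bound in \<open>auto intro!: ZZ.integrable_const_bound[where B=C]\<close>)
qed

lemma cond_expX_of_real_snd:
  assumes "g \<in> borel_measurable UI" and "\<And>y. \<bar>g y\<bar> \<le> C"
  shows "AE z in ZZ. cond_expX (\<lambda>z. of_real (g (snd z))) z = of_real (integral\<^sup>L UI g)"
proof -
  have "AE z in ZZ. real_cond_exp ZZ FX (\<lambda>z. (\<lambda>_. 0) (snd z)) z = integral\<^sup>L UI (\<lambda>_. 0::real)"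
    by (rule real_cond_exp_FX_snd[where C=0]) auto
  with real_cond_exp_FX_snd[OF assms] show ?thesis
    unfolding cond_expX_def by eventually_elim simp
qed

lemma cond_expX_const:
  "AE z in ZZ. cond_expX (\<lambda>_. of_real c) z = of_real c"
proof -
  interpret prob_space UI by (rule prob_space_UI)
  show ?thesis
    using cond_expX_of_real_snd[of "\<lambda>_. c" "\<bar>c\<bar>"] by (simp add: prob_space)
qed

lemma cond_expX_measurable [measurable]: "cond_expX f \<in> borel_measurable ZZ"
  unfolding cond_expX_def by measurable

definition rademacher :: "real \<Rightarrow> real" where
  "rademacher y = 1 - 2 * indicator {1/2<..1} y"

lemma rademacher_sq: "(rademacher y)\<^sup>2 = 1"
  unfolding rademacher_def indicator_def by (simp add: power2_eq_square)

lemma upper_half_UI: "{1/2<..1::real} \<in> sets UI" "measure UI {1/2<..1} = 1/2"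
proof -
  have sub: "{1/2<..1::real} \<subseteq> {0..1}" by auto
  then show "{1/2<..1::real} \<in> sets UI"
    unfolding UI_def by (simp add: sets_restrict_space_iff)
  show "measure UI {1/2<..1} = 1/2"
    unfolding UI_def using sub by (simp add: measure_restrict_space)
qed

lemma rademacher_measurable [measurable]: "rademacher \<in> borel_measurable UI"
  unfolding rademacher_def using upper_half_UI(1) by measurable

lemma integral_rademacher: "integral\<^sup>L UI rademacher = 0"
proof -
  interpret prob_space UI by (rule prob_space_UI)
  have "integral\<^sup>L UI rademacher = 1 - 2 * measure UI {1/2<..1}"
    unfolding rademacher_def using upper_half_UI(1)
    by (subst Bochner_Integration.integral_diff)
       (auto intro!: integrable_real_indicator simp: emeasure_eq_measure prob_space)
  then show ?thesis
    using upper_half_UI(2) by simp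
qed

definition rademacher_snd :: "real \<times> real \<Rightarrow> complex" where
  "rademacher_snd z = of_real (rademacher (snd z))"

lemma cmod_rademacher_snd: "cmod (rademacher_snd z) = 1"
  unfolding rademacher_snd_def rademacher_def by (simp add: indicator_def)

lemma rademacher_snd_measurable [measurable]: "rademacher_snd \<in> borel_measurable ZZ"
  unfolding rademacher_snd_def ZZ_def by measurable

lemma cnj_rademacher_snd: "cnj (rademacher_snd z) = rademacher_snd z"
  unfolding rademacher_snd_def by simp

lemma rademacher_snd_L2ZX: "rademacher_snd \<in> L2ZX"
proof -
  interpret prob_space ZZ by (rule prob_space_ZZ)
  have "AE z in ZZ. real_cond_exp ZZ FX (\<lambda>w. (cmod (rademacher_snd w))\<^sup>2) z = 1"
    using real_cond_exp_FX_snd[of "\<lambda>_. 1" 1] prob_space_UI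
    by (simp add: cmod_rademacher_snd prob_space.prob_space)
  then have "AE z in ZZ. sqrt (real_cond_exp ZZ FX (\<lambda>w. (cmod (rademacher_snd w))\<^sup>2) z) \<le> 1"
    by eventually_elim simp
  moreover have "integrable ZZ (\<lambda>z. (cmod (rademacher_snd z))\<^sup>2)"
    by (simp add: cmod_rademacher_snd)
  ultimately show ?thesis
    unfolding L2ZX_def using rademacher_snd_measurable by blast
qed

lemma cond_expX_rademacher_snd: "AE z in ZZ. cond_expX rademacher_snd z = 0"
  using cond_expX_of_real_snd[of rademacher 1]
  by (simp add: rademacher_snd_def[abs_def] integral_rademacher rademacher_def indicator_def)

lemma snd_funpow_liftX: "snd ((liftX T0 ^^ n) z) = snd z"
  by (induction n) (auto simp: liftX_def split: prod.split)

lemma measurable_liftX: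
  assumes [measurable]: "T0 \<in> measurable UI UI"
  shows "liftX T0 \<in> measurable ZZ ZZ"
proof -
  have "liftX T0 = (\<lambda>z. (T0 (fst z), snd z))"
    unfolding liftX_def by (auto split: prod.split)
  then show ?thesis
    unfolding ZZ_def by simp
qed

lemma norm_diff_power2_le: "(norm (a - b))\<^sup>2 \<le> 2 * (norm a)\<^sup>2 + 2 * (norm b)\<^sup>2"
proof -
  have "(norm (a - b))\<^sup>2 \<le> (norm a + norm b)\<^sup>2"
    by (simp add: norm_triangle_ineq4 power_mono)
  also have "\<dots> \<le> 2 * (norm a)\<^sup>2 + 2 * (norm b)\<^sup>2"
    using sum_squares_ge_zero[of "norm a - norm b" 0] by (simp add: power2_eq_square algebra_simps)
  finally show ?thesis .
qed

lemma L2sq_lower_bound: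
  assumes [measurable]: "u \<in> borel_measurable ZZ" "v \<in> borel_measurable ZZ"
    and diff: "AE z in ZZ. u z - v z = 1"
  shows "1 \<le> 2 * L2sq u + 2 * L2sq v"
proof -
  interpret prob_space ZZ by (rule prob_space_ZZ)
  have "AE z in ZZ. 1 \<le> ennreal (2 * (cmod (u z))\<^sup>2) + ennreal (2 * (cmod (v z))\<^sup>2)"
    using diff
  proof eventually_elim
    case (elim z)
    then have "1 \<le> 2 * (cmod (u z))\<^sup>2 + 2 * (cmod (v z))\<^sup>2"
      using norm_diff_power2_le[of "u z" "v z"] by simp
    then show ?case
      by (simp add: ennreal_plus[symmetric] del: ennreal_plus)
  qed
  then have "(\<integral>\<^sup>+ z. 1 \<partial>ZZ) \<le> (\<integral>\<^sup>+ z. ennreal (2 * (cmod (u z))\<^sup>2) + ennreal (2 * (cmod (v z))\<^sup>2) \<partial>ZZ)"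
    by (rule nn_integral_mono_AE)
  also have "\<dots> = 2 * L2sq u + 2 * L2sq v"
    unfolding L2sq_def by (simp add: nn_integral_add ennreal_mult nn_integral_cmult)
  finally show ?thesis
    by (simp add: emeasure_space_1)
qed

lemma L2sq_not_both_tendsto_0:
  assumes "\<And>k. u k \<in> borel_measurable ZZ" "\<And>k. v k \<in> borel_measurable ZZ"
    and "\<And>k. AE z in ZZ. u k z - v k z = 1"
    and "(\<lambda>k. L2sq (u k)) \<longlonglongrightarrow> 0"
  shows "\<not> (\<lambda>k. L2sq (v k)) \<longlonglongrightarrow> 0"
proof
  assume "(\<lambda>k. L2sq (v k)) \<longlonglongrightarrow> 0"
  with assms(4) have "(\<lambda>k. 2 * L2sq (u k) + 2 * L2sq (v k)) \<longlonglongrightarrow> 2 * 0 + 2 * 0"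
    by (intro tendsto_intros) simp_all
  moreover have "1 \<le> 2 * L2sq (u k) + 2 * L2sq (v k)" for k
    using assms(1-3) by (rule L2sq_lower_bound)
  ultimately have "(1::ennreal) \<le> 2 * 0 + 2 * 0"
    by (intro LIMSEQ_le_const) auto
  then show False by simp
qed

definition mixing_defect ::
    "(real \<times> real \<Rightarrow> real \<times> real) \<Rightarrow> (real \<Rightarrow> real) \<Rightarrow> (real \<times> real \<Rightarrow> complex) \<Rightarrow> nat
      \<Rightarrow> real \<times> real \<Rightarrow> complex" where
  "mixing_defect T T0 f n z = cond_expX (\<lambda>w. f ((T ^^ n) w) * cnj (f w)) z
     - cond_expX f ((liftX T0 ^^ n) z) * cond_expX (\<lambda>w. cnj (f w)) z"

definition rigidity_defect ::
    "(real \<times> real \<Rightarrow> real \<times> real) \<Rightarrow> (real \<Rightarrow> real) \<Rightarrow> (real \<times> real \<Rightarrow> complex) \<Rightarrow> nat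
      \<Rightarrow> real \<times> real \<Rightarrow> complex" where
  "rigidity_defect T T0 f n z = cond_expX (\<lambda>w. f ((T ^^ n) w) * cnj (f w)) z
     - cond_expX (\<lambda>w. f ((liftX T0 ^^ n) w) * cnj (f w)) z"

lemma S_ext_mixing_defect:
  "T \<in> S_ext T0 \<Longrightarrow> f \<in> L2ZX \<Longrightarrow> (\<lambda>n. L2sq (mixing_defect T T0 f n)) \<longlonglongrightarrow> 0"
  unfolding S_ext_def mixing_defect_def[abs_def] by blast

lemma R_ext_rigidity_defect:
  assumes "T \<in> R_ext T0"
  obtains nk where "strict_mono nk" "\<And>f. f \<in> L2ZX \<Longrightarrow> (\<lambda>k. L2sq (rigidity_defect T T0 f (nk k))) \<longlonglongrightarrow> 0"
  using assms unfolding R_ext_def rigidity_defect_def[abs_def] by blast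

lemma mixing_defect_measurable:
  assumes "T0 \<in> measurable UI UI"
  shows "mixing_defect T T0 f n \<in> borel_measurable ZZ"
proof -
  have [measurable]: "liftX T0 ^^ n \<in> measurable ZZ ZZ"
    by (intro measurable_compose_n measurable_liftX assms)
  show ?thesis
    unfolding mixing_defect_def[abs_def] by measurable
qed

lemma rigidity_defect_measurable: "rigidity_defect T T0 f n \<in> borel_measurable ZZ"
  unfolding rigidity_defect_def[abs_def] by measurable

lemma mixing_defect_minus_rigidity_defect:
  "AE z in ZZ. mixing_defect T T0 rademacher_snd n z - rigidity_defect T T0 rademacher_snd n z = 1"
proof -
  have invariant: "rademacher_snd ((liftX T0 ^^ n) w) * rademacher_snd w = 1" for w
    using rademacher_sq[of "snd w"]
    by (simp add: rademacher_snd_def snd_funpow_liftX power2_eq_square flip: of_real_mult)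
  have "AE z in ZZ. cond_expX (\<lambda>_. 1) z = 1"
    using cond_expX_const[of 1] by simp
  with cond_expX_rademacher_snd show ?thesis
    unfolding mixing_defect_def rigidity_defect_def
    by eventually_elim (simp add: invariant cnj_rademacher_snd)
qed

theorem lemma4p2:
  assumes "T0 \<in> invmp UI"
  shows "S_ext T0 \<subseteq> G_ext T0 - R_ext T0"
proof
  fix T assume mixing: "T \<in> S_ext T0"
  have "T \<notin> R_ext T0"
  proof
    assume "T \<in> R_ext T0"
    then obtain nk where nk: "strict_mono nk"
      and rigid: "(\<lambda>k. L2sq (rigidity_defect T T0 rademacher_snd (nk k))) \<longlonglongrightarrow> 0"
      using rademacher_snd_L2ZX by (metis R_ext_rigidity_defect)
    have "T0 \<in> measurable UI UI"
      using assms by (simp add: invmp_def mp_trans_def)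
    moreover have "(\<lambda>k. L2sq (mixing_defect T T0 rademacher_snd (nk k))) \<longlonglongrightarrow> 0"
      using LIMSEQ_subseq_LIMSEQ[OF S_ext_mixing_defect[OF mixing rademacher_snd_L2ZX] nk]
      by (simp add: comp_def)
    ultimately have "\<not> (\<lambda>k. L2sq (rigidity_defect T T0 rademacher_snd (nk k))) \<longlonglongrightarrow> 0"
      using L2sq_not_both_tendsto_0[of "\<lambda>k. mixing_defect T T0 rademacher_snd (nk k)"
          "\<lambda>k. rigidity_defect T T0 rademacher_snd (nk k)"]
      by (simp add: mixing_defect_measurable rigidity_defect_measurable
          mixing_defect_minus_rigidity_defect)
    with rigid show False by simp
  qed
  with mixing show "T \<in> G_ext T0 - R_ext T0"
    unfolding S_ext_def by simp
qed

end
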